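(* Let $m\ge 3$ and $H=\Theta(l_1,\ldots,l_m)$ with $l_1=\cdots=l_m=4$, and let $G=H^2$. Then $G$ is equitably $(m+2)$-choosable.
   Context: $\Theta(l_1,\ldots,l_m)$ denotes the graph consisting of two vertices $u,w$ joined by $m$ internally disjoint paths of lengths $l_1,\ldots,l_m$. For a graph $H$, $H^2$ has vertex set $V(H)$ with two vertices adjacent iff their distance in $H$ is 1 or 2. A $k$-assignment $L$ assigns to each vertex a set of exactly $k$ colors; an equitable $L$-coloring of $G$ is a proper coloring $f$ with $f(v)\in L(v)$ such that no color is used more than $\lceil |V(G)|/k\rceil$ times; $G$ is equitably $k$-choosable if it has an equitable $L$-coloring for every $k$-assignment $L$. *)

theory Defs
  imports Main "HOL-Library.Multiset" Complex_Main
begin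

text \<open>Simple graphs are given by a finite vertex set V and an adjacency
relation E (symmetric, irreflexive, on V).\<close>

text \<open>Vertices of a theta graph: the two branch vertices u, w and
internal vertex j (1 <= j <= l_i - 1) of path i.\<close>
datatype tvert = TU | TW | TP nat nat

definition theta_V :: "nat list \<Rightarrow> tvert set" where
  "theta_V ls = {TU, TW} \<union> {TP i j | i j. i < length ls \<and> 1 \<le> j \<and> j < ls ! i}"

definition theta_pv :: "nat list \<Rightarrow> nat \<Rightarrow> nat \<Rightarrow> tvert" where
  "theta_pv ls i j = (if j = 0 then TU else if j = ls ! i then TW else TP i j)"

definition theta_E :: "nat list \<Rightarrow> tvert \<Rightarrow> tvert \<Rightarrow> bool" where
  "theta_E ls x y = (x \<noteq> y \<and> (\<exists>i < length ls. \<exists>j < ls ! i.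
      {x, y} = {theta_pv ls i j, theta_pv ls i (Suc j)}))"

definition square_E :: "'a set \<Rightarrow> ('a \<Rightarrow> 'a \<Rightarrow> bool) \<Rightarrow> 'a \<Rightarrow> 'a \<Rightarrow> bool" where
  "square_E V E x y = (x \<in> V \<and> y \<in> V \<and> x \<noteq> y \<and>
      (E x y \<or> (\<exists>z \<in> V. E x z \<and> E z y)))"

definition k_assignment :: "'a set \<Rightarrow> nat \<Rightarrow> ('a \<Rightarrow> 'c set) \<Rightarrow> bool" where
  "k_assignment V k L = (\<forall>v \<in> V. finite (L v) \<and> card (L v) = k)"

definition equitable_L_coloring ::
  "'a set \<Rightarrow> ('a \<Rightarrow> 'a \<Rightarrow> bool) \<Rightarrow> nat \<Rightarrow> ('a \<Rightarrow> 'c set) \<Rightarrow> ('a \<Rightarrow> 'c) \<Rightarrow> bool" where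
  "equitable_L_coloring V E k L f =
     ((\<forall>v \<in> V. f v \<in> L v) \<and>
      (\<forall>x \<in> V. \<forall>y \<in> V. E x y \<longrightarrow> f x \<noteq> f y) \<and>
      (\<forall>c. int (card {v \<in> V. f v = c}) \<le> \<lceil>real (card V) / real k\<rceil>))"

text \<open>Colours are taken to be natural numbers (no loss of generality:
only finitely many colours occur in a k-assignment of a finite graph).\<close>
definition equitably_choosable :: "'a set \<Rightarrow> ('a \<Rightarrow> 'a \<Rightarrow> bool) \<Rightarrow> nat \<Rightarrow> bool" where
  "equitably_choosable V E k =
     (\<forall>L :: 'a \<Rightarrow> nat set. k_assignment V k L \<longrightarrow>
        (\<exists>f. equitable_L_coloring V E k L f))"

end

theory Submission
  imports Defs
begin

text \<open>Write \<open>a\<^sub>i, b\<^sub>i, c\<^sub>i\<close> (\<open>TP i 1, TP i 2, TP i 3\<close>) for the internal vertices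
of the \<open>i\<close>-th path, at distance 1, 2, 3 from \<open>u\<close>. Partition the \<open>3m + 2\<close> vertices
into the blocks \<open>{u, w, a\<^sub>0, \<dots>, a\<^sub>m\<^sub>-\<^sub>2, b\<^sub>0}\<close>, \<open>{a\<^sub>m\<^sub>-\<^sub>1, b\<^sub>2, \<dots>, b\<^sub>m\<^sub>-\<^sub>1}\<close> and
\<open>{b\<^sub>1, c\<^sub>0, \<dots>, c\<^sub>m\<^sub>-\<^sub>1}\<close>, and add to \<open>H\<^sup>2\<close> all edges inside each block. In a
suitable vertex order every vertex has at most \<open>m + 1\<close> earlier neighbours in this
auxiliary graph, so it can be coloured greedily from any lists of size \<open>m + 2\<close>. Each
colour then occurs at most once per block, i.e. at most \<open>3 = \<lceil>(3m + 2)/(m + 2)\<rceil>\<close>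
times, because \<open>m \<ge> 3\<close>.\<close>

lemma greedy_list_coloring:
  fixes pos :: "'a \<Rightarrow> 'b::linorder"
  assumes "finite V" and "inj_on pos V" and sym: "\<And>x y. R x y \<Longrightarrow> R y x"
    and few: "\<And>v. v \<in> V \<Longrightarrow> card {x \<in> V. pos x < pos v \<and> R x v} < card (L v)"
  shows "\<exists>f. (\<forall>v\<in>V. f v \<in> L v) \<and> (\<forall>x\<in>V. \<forall>y\<in>V. x \<noteq> y \<longrightarrow> R x y \<longrightarrow> f x \<noteq> f y)"
proof -
  have "finite S \<Longrightarrow> S \<subseteq> V \<Longrightarrow>
    \<exists>f. (\<forall>v\<in>S. f v \<in> L v) \<and> (\<forall>x\<in>S. \<forall>y\<in>S. x \<noteq> y \<longrightarrow> R x y \<longrightarrow> f x \<noteq> f y)" for S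
  proof (induction S rule: finite_ranking_induct[where f = pos])
    case (insert v S)
    then obtain f where fL: "\<forall>x\<in>S. f x \<in> L x"
      and proper: "\<forall>x\<in>S. \<forall>y\<in>S. x \<noteq> y \<longrightarrow> R x y \<longrightarrow> f x \<noteq> f y"
      by auto
    show ?case
    proof (cases "v \<in> S")
      case True
      then show ?thesis using fL proper by (auto simp: insert_absorb)
    next
      case False
      define N where "N = {x \<in> S. R x v}"
      have "finite N"
        using \<open>finite S\<close> unfolding N_def by simp
      have N_earlier: "N \<subseteq> {x \<in> V. pos x < pos v \<and> R x v}"
        using False insert.hyps(2) insert.prems inj_onD[OF \<open>inj_on pos V\<close>]
        unfolding N_def by (auto simp: order.order_iff_strict)
      have "card (f ` N) \<le> card N"
        using \<open>finite N\<close> by (rule card_image_le)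
      also have "\<dots> \<le> card {x \<in> V. pos x < pos v \<and> R x v}"
        using \<open>finite V\<close> N_earlier by (intro card_mono) auto
      also have "\<dots> < card (L v)"
        using few insert.prems by simp
      finally have "\<not> L v \<subseteq> f ` N"
        using card_mono[OF finite_imageI[OF \<open>finite N\<close>]] by fastforce
      then obtain c where c: "c \<in> L v" "c \<notin> f ` N" by blast
      then have fresh: "f x \<noteq> c" if "x \<in> S" "R x v \<or> R v x" for x
        using that sym unfolding N_def by blast
      show ?thesis
      proof (intro exI conjI)
        show "\<forall>x\<in>insert v S. (f(v := c)) x \<in> L x"
          using fL c by simp
        show "\<forall>x\<in>insert v S. \<forall>y\<in>insert v S. x \<noteq> y \<longrightarrow> R x y \<longrightarrow> (f(v := c)) x \<noteq> (f(v := c)) y"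
          using proper fresh False by auto
      qed
    qed
  qed simp
  from this[OF \<open>finite V\<close>] show ?thesis by blast
qed

lemma card_color_class_le_card_blocks:
  assumes "finite V" and "\<forall>x\<in>V. \<forall>y\<in>V. x \<noteq> y \<longrightarrow> blk x = blk y \<longrightarrow> f x \<noteq> f y"
  shows "card {v \<in> V. f v = c} \<le> card (blk ` V)"
proof -
  have "inj_on blk {v \<in> V. f v = c}"
    using assms(2) unfolding inj_on_def by blast
  then have "card {v \<in> V. f v = c} = card (blk ` {v \<in> V. f v = c})"
    by (simp add: card_image)
  also have "\<dots> \<le> card (blk ` V)"
    using \<open>finite V\<close> by (intro card_mono) auto
  finally show ?thesis .
qed

lemma equitably_choosable_by_block_order:
  fixes pos :: "'a \<Rightarrow> 'b::linorder"
  assumes "finite V" and "inj_on pos V"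
    and blocks: "int (card (blk ` V)) \<le> \<lceil>real (card V) / real k\<rceil>"
    and irrefl: "\<And>x y. E x y \<Longrightarrow> x \<noteq> y"
    and few: "\<And>v. v \<in> V \<Longrightarrow>
      card {x \<in> V. pos x < pos v \<and> (blk x = blk v \<or> E x v \<or> E v x)} < k"
  shows "equitably_choosable V E k"
  unfolding equitably_choosable_def
proof (intro allI impI)
  fix L :: "'a \<Rightarrow> nat set"
  assume "k_assignment V k L"
  then have "card (L v) = k" if "v \<in> V" for v
    using that by (simp add: k_assignment_def)
  then obtain f where fL: "\<forall>v\<in>V. f v \<in> L v"
    and proper: "\<forall>x\<in>V. \<forall>y\<in>V. x \<noteq> y \<longrightarrow> blk x = blk y \<or> E x y \<or> E y x \<longrightarrow> f x \<noteq> f y"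
    using greedy_list_coloring[OF \<open>finite V\<close> \<open>inj_on pos V\<close>,
        of "\<lambda>x y. blk x = blk y \<or> E x y \<or> E y x" L] few
    by fastforce
  have "card {v \<in> V. f v = c} \<le> card (blk ` V)" for c
    using proper by (intro card_color_class_le_card_blocks[OF \<open>finite V\<close>]) blast
  then have "int (card {v \<in> V. f v = c}) \<le> \<lceil>real (card V) / real k\<rceil>" for c
    using blocks of_nat_mono order_trans by blast
  moreover have "\<forall>x\<in>V. \<forall>y\<in>V. E x y \<longrightarrow> f x \<noteq> f y"
    using proper irrefl by blast
  ultimately show "\<exists>f. equitable_L_coloring V E k L f"
    unfolding equitable_L_coloring_def using fL by blast
qed

abbreviation theta4_V :: "nat \<Rightarrow> tvert set" where
  "theta4_V m \<equiv> theta_V (replicate m 4)"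

abbreviation theta4_E :: "nat \<Rightarrow> tvert \<Rightarrow> tvert \<Rightarrow> bool" where
  "theta4_E m \<equiv> theta_E (replicate m 4)"

lemma theta4_V_cases:
  assumes "x \<in> theta4_V m"
  obtains "x = TU" | "x = TW" | i where "x = TP i 1" "i < m" | i where "x = TP i 2" "i < m"
    | i where "x = TP i 3" "i < m"
proof -
  from assms consider "x = TU" | "x = TW" | i j where "x = TP i j" "i < m" "j = 1 \<or> j = 2 \<or> j = 3"
    unfolding theta_V_def by force
  then show ?thesis
    using that by cases auto
qed

lemma card_theta4_V: "card (theta4_V m) = 3 * m + 2"
proof -
  define P where "P = (\<lambda>(i, j). TP i j) ` ({..<m} \<times> {1..3::nat})"
  have "theta4_V m = insert TU (insert TW P)"
    unfolding theta_V_def P_def by (auto simp: image_iff less_Suc_eq_le)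
  moreover have "card P = 3 * m"
    unfolding P_def by (subst card_image) (auto simp: inj_on_def card_cartesian_product)
  moreover have "TU \<notin> P" "TW \<notin> P" "finite P"
    unfolding P_def by auto
  ultimately show ?thesis by simp
qed

lemma finite_theta4_V: "finite (theta4_V m)"
  by (rule card_ge_0_finite) (simp add: card_theta4_V)

lemma theta4_E_cases:
  assumes "theta4_E m x y"
  obtains i where "x = TU" "y = TP i 1" | i where "x = TP i 1" "y = TU"
    | i where "x = TP i 1" "y = TP i 2" | i where "x = TP i 2" "y = TP i 1"
    | i where "x = TP i 2" "y = TP i 3" | i where "x = TP i 3" "y = TP i 2"
    | i where "x = TP i 3" "y = TW" | i where "x = TW" "y = TP i 3"
proof -
  from assms obtain i j where "i < m" "j < 4"
    "{x, y} = {theta_pv (replicate m 4) i j, theta_pv (replicate m 4) i (Suc j)}"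
    unfolding theta_E_def by auto
  moreover have "j = 0 \<or> j = 1 \<or> j = 2 \<or> j = 3" using \<open>j < 4\<close> by auto
  ultimately show ?thesis
    using that by (elim disjE) (auto simp: theta_pv_def doubleton_eq_iff)
qed

text \<open>An over-approximation of adjacency in \<open>H\<^sup>2\<close> (it also relates each internal
vertex to itself): \<open>a\<^sub>i\<close>, \<open>a\<^sub>j\<close> are joined through \<open>u\<close> and \<open>c\<^sub>i\<close>, \<open>c\<^sub>j\<close> through \<open>w\<close>.\<close>

fun theta4_near :: "tvert \<Rightarrow> tvert \<Rightarrow> bool" where
  "theta4_near TU (TP i j) = (j = 1 \<or> j = 2)"
| "theta4_near (TP i j) TU = (j = 1 \<or> j = 2)"
| "theta4_near TW (TP i j) = (j = 2 \<or> j = 3)"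
| "theta4_near (TP i j) TW = (j = 2 \<or> j = 3)"
| "theta4_near (TP i j) (TP i' j') = (i = i' \<or> (j = 1 \<and> j' = 1) \<or> (j = 3 \<and> j' = 3))"
| "theta4_near _ _ = False"

lemma theta4_E_imp_near: "theta4_E m x y \<Longrightarrow> theta4_near x y"
  by (elim theta4_E_cases) (auto simp: doubleton_eq_iff)

lemma square_theta4_imp_near:
  assumes "square_E (theta4_V m) (theta4_E m) x y"
  shows "theta4_near x y"
proof -
  have "x \<noteq> y" using assms unfolding square_E_def by auto
  from assms consider "theta4_E m x y" | z where "theta4_E m x z" "theta4_E m z y"
    unfolding square_E_def by auto
  then show ?thesis
  proof cases
    case 2
    from 2(1) 2(2) \<open>x \<noteq> y\<close> show ?thesis
      by (elim theta4_E_cases) auto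
  qed (rule theta4_E_imp_near)
qed

text \<open>The greedy order: \<open>u, w, a\<^sub>0, a\<^sub>1, b\<^sub>0, b\<^sub>1, c\<^sub>0, c\<^sub>1\<close>, then
\<open>a\<^sub>2, \<dots>, a\<^sub>m\<^sub>-\<^sub>2\<close>, then \<open>c\<^sub>2, \<dots>, c\<^sub>m\<^sub>-\<^sub>1\<close>, then \<open>a\<^sub>m\<^sub>-\<^sub>1\<close>, and finally
\<open>b\<^sub>2, \<dots>, b\<^sub>m\<^sub>-\<^sub>1\<close>.\<close>

fun theta4_rank :: "nat \<Rightarrow> tvert \<Rightarrow> nat" where
  "theta4_rank m TU = 0"
| "theta4_rank m TW = 1"
| "theta4_rank m (TP i j) =
   (if j = 1 then (if i = 0 then 2 else if i = 1 then 3 else if i = m - 1 then 2*m+3 else i+6)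
    else if j = 2 then (if i = 0 then 4 else if i = 1 then 5 else 2*m+i+2)
    else (if i = 0 then 6 else if i = 1 then 7 else m+i+3))"

definition theta4_unrank :: "nat \<Rightarrow> nat \<Rightarrow> tvert" where
  "theta4_unrank m p = (if p = 0 then TU else if p = 1 then TW else if p = 2 then TP 0 1
     else if p = 3 then TP 1 1 else if p = 4 then TP 0 2 else if p = 5 then TP 1 2
     else if p = 6 then TP 0 3 else if p = 7 then TP 1 3
     else if p \<le> m + 4 then TP (p - 6) 1 else if p \<le> 2*m+2 then TP (p - m - 3) 3
     else if p = 2*m+3 then TP (m - 1) 1 else TP (p - 2*m - 2) 2)"

lemma inj_on_theta4_rank:
  assumes "3 \<le> m"
  shows "inj_on (theta4_rank m) (theta4_V m)"
proof (rule inj_on_inverseI[where g = "theta4_unrank m"])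
  fix x assume "x \<in> theta4_V m"
  then show "theta4_unrank m (theta4_rank m x) = x"
    using assms by (elim theta4_V_cases) (auto simp: theta4_unrank_def)
qed

datatype block = Block_a | Block_b | Block_c

fun theta4_block :: "nat \<Rightarrow> tvert \<Rightarrow> block" where
  "theta4_block m (TP i j) =
     (if j = 2 then (if i = 0 then Block_a else if i = 1 then Block_c else Block_b)
      else if j = 3 then Block_c
      else if i = m - 1 then Block_b else Block_a)"
| "theta4_block m _ = Block_a"

definition earlier_conflicts :: "nat \<Rightarrow> tvert \<Rightarrow> tvert set" where
  "earlier_conflicts m v = {x \<in> theta4_V m. theta4_rank m x < theta4_rank m v \<and>
      (theta4_block m x = theta4_block m v \<or> theta4_near x v \<or> theta4_near v x)}"

lemma card_earlier_conflicts_le_rank: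
  assumes "3 \<le> m"
  shows "card (earlier_conflicts m v) \<le> theta4_rank m v"
proof -
  have "card (earlier_conflicts m v) = card (theta4_rank m ` earlier_conflicts m v)"
    using inj_on_subset[OF inj_on_theta4_rank[OF assms]]
    by (intro card_image[symmetric]) (auto simp: earlier_conflicts_def)
  also have "\<dots> \<le> card {..<theta4_rank m v}"
    by (intro card_mono) (auto simp: earlier_conflicts_def)
  finally show ?thesis by simp
qed

lemma card_earlier_conflicts_le_cover:
  assumes "earlier_conflicts m v \<subseteq> set xs \<union> (\<lambda>j. TP j l) ` {a..<b}"
    and "length xs + (b - a) \<le> m + 1"
  shows "card (earlier_conflicts m v) \<le> m + 1"
proof -
  have "card (earlier_conflicts m v) \<le> card (set xs \<union> (\<lambda>j. TP j l) ` {a..<b})"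
    using assms(1) by (intro card_mono) auto
  also have "\<dots> \<le> card (set xs) + card ((\<lambda>j. TP j l) ` {a..<b})"
    by (rule card_Un_le)
  also have "\<dots> \<le> length xs + (b - a)"
    using card_length card_image_le[of "{a..<b}" "\<lambda>j. TP j l"] by (intro add_mono) auto
  finally show ?thesis using assms(2) by simp
qed

lemma card_earlier_conflicts_level1:
  assumes "3 \<le> m" and "i < m"
  shows "card (earlier_conflicts m (TP i 1)) \<le> m + 1"
proof -
  consider "i = 0 \<or> i = 1" | "i = m - 1" | "2 \<le> i" "i \<le> m - 2" using assms by linarith
  then show ?thesis
  proof cases
    case 1
    then show ?thesis
      using card_earlier_conflicts_le_rank[OF assms(1), of "TP i 1"] assms by auto
  next
    case 2
    show ?thesis
      unfolding \<open>i = m - 1\<close>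
      by (rule card_earlier_conflicts_le_cover[where
            xs = "[TU, TP (m-1) 3]" and l = 1 and a = 0 and b = "m - 1"])
        (use assms(1) in \<open>auto simp: earlier_conflicts_def elim!: theta4_V_cases split: if_splits\<close>)
  next
    case 3
    show ?thesis
      by (rule card_earlier_conflicts_le_cover[where
            xs = "[TU, TW, TP 0 1, TP 1 1, TP 0 2]" and l = 1 and a = 2 and b = i])
        (use assms(1) 3 in \<open>auto simp: earlier_conflicts_def elim!: theta4_V_cases split: if_splits\<close>)
  qed
qed

lemma card_earlier_conflicts_level2:
  assumes "3 \<le> m" and "i < m"
  shows "card (earlier_conflicts m (TP i 2)) \<le> m + 1"
proof -
  consider "i = 0" | "i = 1" | "i = m - 1" | "2 \<le> i" "i \<le> m - 2" using assms by linarith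
  then show ?thesis
  proof cases
    case 1
    then show ?thesis
      using card_earlier_conflicts_le_rank[OF assms(1), of "TP i 2"] assms by auto
  next
    case 2
    show ?thesis
      unfolding \<open>i = 1\<close>
      by (rule card_earlier_conflicts_le_cover[where
            xs = "[TU, TW, TP 1 1]" and l = 2 and a = 0 and b = 0])
        (use assms(1) in \<open>auto simp: earlier_conflicts_def elim!: theta4_V_cases split: if_splits\<close>)
  next
    case 3
    show ?thesis
      unfolding \<open>i = m - 1\<close>
      by (rule card_earlier_conflicts_le_cover[where
            xs = "[TP (m-1) 1, TU, TW, TP (m-1) 3]" and l = 2 and a = 2 and b = "m - 1"])
        (use assms(1) in \<open>auto simp: earlier_conflicts_def elim!: theta4_V_cases split: if_splits\<close>)
  next
    case 4
    show ?thesis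
      by (rule card_earlier_conflicts_le_cover[where
            xs = "[TP (m-1) 1, TU, TW, TP i 1, TP i 3]" and l = 2 and a = 2 and b = i])
        (use assms(1) 4 in \<open>auto simp: earlier_conflicts_def elim!: theta4_V_cases split: if_splits\<close>)
  qed
qed

lemma card_earlier_conflicts_level3:
  assumes "3 \<le> m" and "i < m"
  shows "card (earlier_conflicts m (TP i 3)) \<le> m + 1"
proof -
  consider "i = 0" | "i = 1" | "i = m - 1" | "2 \<le> i" "i \<le> m - 2" using assms by linarith
  then show ?thesis
  proof cases
    case 1
    show ?thesis
      unfolding \<open>i = 0\<close>
      by (rule card_earlier_conflicts_le_cover[where
            xs = "[TW, TP 1 2, TP 0 1, TP 0 2]" and l = 3 and a = 0 and b = 0])
        (use assms(1) in \<open>auto simp: earlier_conflicts_def elim!: theta4_V_cases split: if_splits\<close>)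
  next
    case 2
    show ?thesis
      unfolding \<open>i = 1\<close>
      by (rule card_earlier_conflicts_le_cover[where
            xs = "[TW, TP 1 2, TP 0 3, TP 1 1]" and l = 3 and a = 0 and b = 0])
        (use assms(1) in \<open>auto simp: earlier_conflicts_def elim!: theta4_V_cases split: if_splits\<close>)
  next
    case 3
    show ?thesis
      unfolding \<open>i = m - 1\<close>
      by (rule card_earlier_conflicts_le_cover[where
            xs = "[TP 1 2, TP 0 3, TP 1 3, TW]" and l = 3 and a = 2 and b = "m - 1"])
        (use assms(1) in \<open>auto simp: earlier_conflicts_def elim!: theta4_V_cases split: if_splits\<close>)
  next
    case 4
    show ?thesis
      by (rule card_earlier_conflicts_le_cover[where
            xs = "[TP 1 2, TP 0 3, TP 1 3, TW, TP i 1]" and l = 3 and a = 2 and b = i])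
        (use assms(1) 4 in \<open>auto simp: earlier_conflicts_def elim!: theta4_V_cases split: if_splits\<close>)
  qed
qed

lemma card_earlier_conflicts:
  assumes "3 \<le> m" and "v \<in> theta4_V m"
  shows "card (earlier_conflicts m v) \<le> m + 1"
  using assms(2)
proof (cases rule: theta4_V_cases)
  case 1
  then show ?thesis using card_earlier_conflicts_le_rank[OF assms(1), of v] by simp
next
  case 2
  then show ?thesis using card_earlier_conflicts_le_rank[OF assms(1), of v] by simp
next
  case (3 i)
  then show ?thesis using card_earlier_conflicts_level1[OF assms(1)] by simp
next
  case (4 i)
  then show ?thesis using card_earlier_conflicts_level2[OF assms(1)] by simp
next
  case (5 i)
  then show ?thesis using card_earlier_conflicts_level3[OF assms(1)] by simp
qed

theorem lemma3p8:
  fixes m :: nat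
  assumes "m \<ge> 3"
  shows "equitably_choosable (theta_V (replicate m 4))
           (square_E (theta_V (replicate m 4)) (theta_E (replicate m 4))) (m + 2)"
proof (rule equitably_choosable_by_block_order[where pos = "theta4_rank m" and blk = "theta4_block m"],
    goal_cases)
  show "finite (theta4_V m)"
    by (rule finite_theta4_V)
  show "inj_on (theta4_rank m) (theta4_V m)"
    using assms by (rule inj_on_theta4_rank)
  have "card (theta4_block m ` theta4_V m) \<le> card {Block_a, Block_b, Block_c}"
    by (intro card_mono) (auto intro: block.exhaust)
  moreover have "2 < real (3 * m + 2) / real (m + 2)"
    using assms by (simp add: pos_less_divide_eq)
  ultimately show "int (card (theta4_block m ` theta4_V m))
      \<le> \<lceil>real (card (theta4_V m)) / real (m + 2)\<rceil>"
    by (simp add: card_theta4_V le_ceiling_iff)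
  show "x \<noteq> y" if "square_E (theta4_V m) (theta4_E m) x y" for x y
    using that by (simp add: square_E_def)
next
  case (5 v)
  have fin: "finite (earlier_conflicts m v)"
    by (simp add: earlier_conflicts_def finite_theta4_V)
  have less: "card (earlier_conflicts m v) < m + 2"
    using card_earlier_conflicts[OF assms 5] by simp
  show ?case
    by (rule le_less_trans[OF card_mono[OF fin] less])
      (unfold earlier_conflicts_def, use square_theta4_imp_near in blast)
qed

end
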